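(* For $\alpha_1,\alpha_2\in\mathbf{C}$, the superalgebras $B_{2,\alpha_1}$ and $B_{2,\alpha_2}$ are isomorphic if and only if $\alpha_1=\alpha_2$.
   Context: Isomorphisms are even bijective linear maps preserving the product. For $\alpha\in\mathbf{C}$, put $\beta=1+\alpha$, $\gamma=1-\alpha$. $B_{2,\alpha}$ is the superalgebra on the superspace with ordered basis $(x_1,x_2,x_3,x_4,y_1,y_2,y_3,y_4)$ ($x_i$ even, $y_j$ odd) given by left multiplication matrices $L(a)$, whose $j$-th column is the coordinate vector of $a\cdot(\text{$j$-th basis vector})$. Write $L(a)=\begin{pmatrix}P&Q\\R&S\end{pmatrix}$ with $4\times4$ blocks; for $a=x_i$, $Q=R=0$; for $a=y_j$, $P=S=0$. Rows separated by semicolons: $L(x_1)$: $P=[0,0,-1,\beta;0,0,0,0;0,\beta/2,0,0;0,\tfrac12,0,0]$, $S=0$. $L(x_2)$: $P=[0,0,0,0;0,0,1,\gamma;-\gamma/2,0,0,0;\tfrac12,0,0,0]$, $S=0$. $L(x_3)$: $P=[1,0,0,0;0,-1,0,0;0,0,\alpha,\beta\gamma;0,0,1,-\alpha]$, $S=0$. $L(x_4)$: $P=[\beta,0,0,0;0,\gamma,0,0;0,0,\beta\gamma,-\alpha\beta\gamma;0,0,-\alpha,1+\alpha^2]$, $S=\mathrm{diag}(2-\alpha,2+\alpha,\alpha,-\alpha)$. $L(y_1)$: $Q=[0,0,0,0;0,0,0,\alpha\beta/4;0,0,-\alpha\gamma/4,0;0,0,\alpha/4,0]$, $R=[0,0,1,\gamma;1,0,0,0;0,0,0,0;0,0,0,0]$.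 $L(y_2)$: $Q=[0,0,-\alpha/2,0;0,0,0,0;0,0,0,-\alpha\beta/4;0,0,0,-\alpha/4]$, $R=[0,1,0,0;0,0,-1,\beta;0,0,0,0;0,0,0,0]$. $L(y_3)$: $Q=[0,1+\alpha/2,0,0;0,0,0,0;(\alpha\gamma+2)/4,0,0,0;(2-\alpha)/4,0,0,0]$, $R=[0,0,0,0;0,0,0,0;0,0,-1,\beta;0,-1,0,0]$. $L(y_4)$: $Q=[0,0,0,0;1-\alpha\beta/4,0,0,0;0,(\alpha\beta-2)/4,0,0;0,(\alpha+2)/4,0,0]$, $R=[0,0,0,0;0,0,0,0;-1,0,0,0;0,0,1,\gamma]$. *)

theory Defs
  imports Complex_Main
begin

text \<open>The superalgebra B_{2,alpha} on C^8. Basis (x1,x2,x3,x4,y1,y2,y3,y4) is indexed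
  0..7; indices 0..3 are even, 4..7 are odd. Vectors are functions nat => complex
  vanishing outside {0..<8}.  Lmat alpha a r c is the (r,c) entry of the left
  multiplication matrix L(e_a), i.e. the e_r-coordinate of e_a * e_c.\<close>

definition Z4 :: "complex list list" where
  "Z4 = replicate 4 (replicate 4 0)"

definition blocks :: "complex \<Rightarrow> nat \<Rightarrow> complex list list \<times> complex list list \<times> complex list list \<times> complex list list" where
  "blocks \<alpha> a = (let \<beta> = 1 + \<alpha>; \<gamma> = 1 - \<alpha> in
    if a = 0 then
      ([[0,0,-1,\<beta>],[0,0,0,0],[0,\<beta>/2,0,0],[0,1/2,0,0]], Z4, Z4, Z4)
    else if a = 1 then
      ([[0,0,0,0],[0,0,1,\<gamma>],[-\<gamma>/2,0,0,0],[1/2,0,0,0]], Z4, Z4, Z4)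
    else if a = 2 then
      ([[1,0,0,0],[0,-1,0,0],[0,0,\<alpha>,\<beta>*\<gamma>],[0,0,1,-\<alpha>]], Z4, Z4, Z4)
    else if a = 3 then
      ([[\<beta>,0,0,0],[0,\<gamma>,0,0],[0,0,\<beta>*\<gamma>,-\<alpha>*\<beta>*\<gamma>],[0,0,-\<alpha>,1+\<alpha>^2]], Z4, Z4,
       [[2-\<alpha>,0,0,0],[0,2+\<alpha>,0,0],[0,0,\<alpha>,0],[0,0,0,-\<alpha>]])
    else if a = 4 then
      (Z4, [[0,0,0,0],[0,0,0,\<alpha>*\<beta>/4],[0,0,-\<alpha>*\<gamma>/4,0],[0,0,\<alpha>/4,0]],
           [[0,0,1,\<gamma>],[1,0,0,0],[0,0,0,0],[0,0,0,0]], Z4)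
    else if a = 5 then
      (Z4, [[0,0,-\<alpha>/2,0],[0,0,0,0],[0,0,0,-\<alpha>*\<beta>/4],[0,0,0,-\<alpha>/4]],
           [[0,1,0,0],[0,0,-1,\<beta>],[0,0,0,0],[0,0,0,0]], Z4)
    else if a = 6 then
      (Z4, [[0,1+\<alpha>/2,0,0],[0,0,0,0],[(\<alpha>*\<gamma>+2)/4,0,0,0],[(2-\<alpha>)/4,0,0,0]],
           [[0,0,0,0],[0,0,0,0],[0,0,-1,\<beta>],[0,-1,0,0]], Z4)
    else if a = 7 then
      (Z4, [[0,0,0,0],[1-\<alpha>*\<beta>/4,0,0,0],[0,(\<alpha>*\<beta>-2)/4,0,0],[0,(\<alpha>+2)/4,0,0]],
           [[0,0,0,0],[0,0,0,0],[-1,0,0,0],[0,0,1,\<gamma>]], Z4)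
    else (Z4, Z4, Z4, Z4))"

definition Lmat :: "complex \<Rightarrow> nat \<Rightarrow> nat \<Rightarrow> nat \<Rightarrow> complex" where
  "Lmat \<alpha> a r c = (case blocks \<alpha> a of (P, Q, R, S) \<Rightarrow>
     if r < 4 \<and> c < 4 then P ! r ! c
     else if r < 4 \<and> 4 \<le> c \<and> c < 8 then Q ! r ! (c - 4)
     else if 4 \<le> r \<and> r < 8 \<and> c < 4 then R ! (r - 4) ! c
     else if 4 \<le> r \<and> r < 8 \<and> 4 \<le> c \<and> c < 8 then S ! (r - 4) ! (c - 4)
     else 0)"

definition V8 :: "(nat \<Rightarrow> complex) set" where
  "V8 = {v. \<forall>k\<ge>8. v k = 0}"

definition V8_even :: "(nat \<Rightarrow> complex) set" where
  "V8_even = {v. \<forall>k\<ge>4. v k = 0}"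

definition V8_odd :: "(nat \<Rightarrow> complex) set" where
  "V8_odd = {v. \<forall>k. (k < 4 \<or> 8 \<le> k) \<longrightarrow> v k = 0}"

definition Bmult :: "complex \<Rightarrow> (nat \<Rightarrow> complex) \<Rightarrow> (nat \<Rightarrow> complex) \<Rightarrow> (nat \<Rightarrow> complex)" where
  "Bmult \<alpha> u v = (\<lambda>r. if r < 8 then (\<Sum>a<8. \<Sum>c<8. u a * v c * Lmat \<alpha> a r c) else 0)"

definition B2_isomorphic :: "complex \<Rightarrow> complex \<Rightarrow> bool" where
  "B2_isomorphic \<alpha>1 \<alpha>2 = (\<exists>f.
      bij_betw f V8 V8 \<and>
      (\<forall>u\<in>V8. \<forall>v\<in>V8. f (\<lambda>k. u k + v k) = (\<lambda>k. f u k + f v k)) \<and>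
      (\<forall>c. \<forall>u\<in>V8. f (\<lambda>k. c * u k) = (\<lambda>k. c * f u k)) \<and>
      f ` V8_even \<subseteq> V8_even \<and> f ` V8_odd \<subseteq> V8_odd \<and>
      (\<forall>u\<in>V8. \<forall>v\<in>V8. f (Bmult \<alpha>1 u v) = Bmult \<alpha>2 (f u) (f v)))"

end

theory Submission
  imports Defs
begin

text \<open>An even isomorphism \<open>f : B(\<alpha>\<^sub>1) \<rightarrow> B(\<alpha>\<^sub>2)\<close> preserves the left annihilator
  \<open>span(x\<^sub>1, x\<^sub>2, x\<^sub>3)\<close> of the odd part, and \<open>x\<^sub>3 x\<^sub>3 = \<alpha> x\<^sub>3 + x\<^sub>4\<close> expresses \<open>f(x\<^sub>4)\<close>
  through \<open>f(x\<^sub>3)\<close>. On the odd part \<open>(L(x\<^sub>4) + \<alpha> R(x\<^sub>3)) / 2\<close> is the projection onto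
  \<open>span(y\<^sub>1, y\<^sub>2)\<close> along \<open>span(y\<^sub>3, y\<^sub>4)\<close>; transporting it along \<open>f\<close> forces \<open>f(x\<^sub>3) = \<plusminus>x\<^sub>3\<close>
  and \<open>\<alpha>\<^sub>2 = \<plusminus>\<alpha>\<^sub>1\<close>. If \<open>\<alpha>\<^sub>2 = -\<alpha>\<^sub>1 \<noteq> 0\<close>, then \<open>f\<close> fixes \<open>x\<^sub>4\<close> and swaps \<open>y\<^sub>1 \<leftrightarrow> y\<^sub>2\<close>,
  \<open>y\<^sub>3 \<leftrightarrow> y\<^sub>4\<close> up to scalars, which the structure constants of the products
  \<open>y\<^sub>2 y\<^sub>3, y\<^sub>3 y\<^sub>2, y\<^sub>1 y\<^sub>4\<close> rule out.\<close>

lemma sum_lessThan_8: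
  "(\<Sum>a<(8::nat). g a) = g 0 + g 1 + g 2 + g 3 + g 4 + g 5 + g 6 + g 7"
  by (simp add: eval_nat_numeral add.assoc)

lemma Bmult_0: "Bmult \<alpha> u v 0 =
    - u 0 * v 2 + u 0 * v 3 * (1 + \<alpha>) + u 2 * v 0 + u 3 * v 0 * (1 + \<alpha>)
    + u 5 * v 6 * (- \<alpha> / 2) + u 6 * v 5 * (1 + \<alpha> / 2)"
  by (simp add: Bmult_def sum_lessThan_8 Lmat_def blocks_def Z4_def Let_def)

lemma Bmult_1: "Bmult \<alpha> u v 1 =
    u 1 * v 2 + u 1 * v 3 * (1 - \<alpha>) - u 2 * v 1 + u 3 * v 1 * (1 - \<alpha>)
    + u 4 * v 7 * (\<alpha> * (1 + \<alpha>) / 4) + u 7 * v 4 * (1 - \<alpha> * (1 + \<alpha>) / 4)"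
  by (simp add: Bmult_def sum_lessThan_8 Lmat_def blocks_def Z4_def Let_def)

lemma Bmult_2: "Bmult \<alpha> u v 2 =
    u 0 * v 1 * ((1 + \<alpha>) / 2) + u 1 * v 0 * (- (1 - \<alpha>) / 2) + u 2 * v 2 * \<alpha>
    + u 2 * v 3 * ((1 + \<alpha>) * (1 - \<alpha>)) + u 3 * v 2 * ((1 + \<alpha>) * (1 - \<alpha>))
    + u 3 * v 3 * (- \<alpha> * (1 + \<alpha>) * (1 - \<alpha>))
    + u 4 * v 6 * (- \<alpha> * (1 - \<alpha>) / 4) + u 5 * v 7 * (- \<alpha> * (1 + \<alpha>) / 4)
    + u 6 * v 4 * ((\<alpha> * (1 - \<alpha>) + 2) / 4) + u 7 * v 5 * ((\<alpha> * (1 + \<alpha>) - 2) / 4)"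
  by (simp add: Bmult_def sum_lessThan_8 Lmat_def blocks_def Z4_def Let_def)

lemma Bmult_3: "Bmult \<alpha> u v 3 =
    u 0 * v 1 / 2 + u 1 * v 0 / 2 + u 2 * v 2 - u 2 * v 3 * \<alpha> - u 3 * v 2 * \<alpha>
    + u 3 * v 3 * (1 + \<alpha>\<^sup>2) + u 4 * v 6 * (\<alpha> / 4) + u 5 * v 7 * (- \<alpha> / 4)
    + u 6 * v 4 * ((2 - \<alpha>) / 4) + u 7 * v 5 * ((\<alpha> + 2) / 4)"
  by (simp add: Bmult_def sum_lessThan_8 Lmat_def blocks_def Z4_def Let_def)

lemma Bmult_4: "Bmult \<alpha> u v 4 = u 3 * v 4 * (2 - \<alpha>) + u 4 * v 2 + u 4 * v 3 * (1 - \<alpha>) + u 5 * v 1"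
  by (simp add: Bmult_def sum_lessThan_8 Lmat_def blocks_def Z4_def Let_def)

lemma Bmult_5: "Bmult \<alpha> u v 5 = u 3 * v 5 * (2 + \<alpha>) + u 4 * v 0 - u 5 * v 2 + u 5 * v 3 * (1 + \<alpha>)"
  by (simp add: Bmult_def sum_lessThan_8 Lmat_def blocks_def Z4_def Let_def)

lemma Bmult_6: "Bmult \<alpha> u v 6 = u 3 * v 6 * \<alpha> - u 6 * v 2 + u 6 * v 3 * (1 + \<alpha>) - u 7 * v 0"
  by (simp add: Bmult_def sum_lessThan_8 Lmat_def blocks_def Z4_def Let_def)

lemma Bmult_7: "Bmult \<alpha> u v 7 = - u 3 * v 7 * \<alpha> - u 6 * v 1 + u 7 * v 2 + u 7 * v 3 * (1 - \<alpha>)"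
  by (simp add: Bmult_def sum_lessThan_8 Lmat_def blocks_def Z4_def Let_def)

lemma Bmult_ge_8: "8 \<le> r \<Longrightarrow> Bmult \<alpha> u v r = 0"
  by (simp add: Bmult_def)

lemmas Bmult_coords =
  Bmult_0 Bmult_1 Bmult_1[unfolded One_nat_def] Bmult_2 Bmult_3 Bmult_4 Bmult_5 Bmult_6 Bmult_7

lemma Bmult_in_V8: "Bmult \<alpha> u v \<in> V8"
  by (simp add: V8_def Bmult_def)

lemma vec8_eq_iff:
  "(F::nat \<Rightarrow> complex) = G \<longleftrightarrow>
    F 0 = G 0 \<and> F 1 = G 1 \<and> F 2 = G 2 \<and> F 3 = G 3 \<and> F 4 = G 4 \<and> F 5 = G 5 \<and>
    F 6 = G 6 \<and> F 7 = G 7 \<and> (\<forall>k\<ge>8. F k = G k)"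
proof
  assume coords: "F 0 = G 0 \<and> F 1 = G 1 \<and> F 2 = G 2 \<and> F 3 = G 3 \<and> F 4 = G 4 \<and> F 5 = G 5 \<and>
    F 6 = G 6 \<and> F 7 = G 7 \<and> (\<forall>k\<ge>8. F k = G k)"
  show "F = G"
  proof
    fix k
    show "F k = G k"
    proof (cases "k < 8")
      case True
      then have "k = 0 \<or> k = 1 \<or> k = 2 \<or> k = 3 \<or> k = 4 \<or> k = 5 \<or> k = 6 \<or> k = 7" by auto
      then show ?thesis using coords by auto
    qed (use coords in auto)
  qed
qed auto

lemma V8_oddD: "y \<in> V8_odd \<Longrightarrow> y 0 = 0 \<and> y 1 = 0 \<and> y 2 = 0 \<and> y 3 = 0 \<and> (\<forall>k\<ge>8. y k = 0)"
  by (auto simp: V8_odd_def)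

lemma V8_odd_subset: "V8_odd \<subseteq> V8"
  by (auto simp: V8_odd_def V8_def)

lemma V8_even_subset: "V8_even \<subseteq> V8"
  by (auto simp: V8_even_def V8_def)

text \<open>Indices start at 0: \<open>x\<^sub>i = basis_vec (i - 1)\<close> and \<open>y\<^sub>j = basis_vec (j + 3)\<close>.\<close>
definition basis_vec :: "nat \<Rightarrow> nat \<Rightarrow> complex" where
  "basis_vec j = (\<lambda>i. if i = j then 1 else 0)"

lemma basis_vec_in_V8: "j < 8 \<Longrightarrow> basis_vec j \<in> V8"
  by (simp add: V8_def basis_vec_def)

lemma basis_vec_even: "j < 4 \<Longrightarrow> basis_vec j \<in> V8_even"
  by (simp add: V8_even_def basis_vec_def)

lemma basis_vec_odd: "4 \<le> j \<Longrightarrow> j < 8 \<Longrightarrow> basis_vec j \<in> V8_odd"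
  by (auto simp: V8_odd_def basis_vec_def)

lemma Bmult_annihilates_odd:
  "a < 3 \<Longrightarrow> y \<in> V8_odd \<Longrightarrow> Bmult \<alpha> (basis_vec a) y = (\<lambda>k. 0)"
  by (drule V8_oddD, subgoal_tac "a = 0 \<or> a = 1 \<or> a = 2")
    (auto simp: vec8_eq_iff Bmult_coords basis_vec_def Bmult_ge_8)

lemma Bmult_x3_x3: "Bmult \<alpha> (basis_vec 2) (basis_vec 2) = (\<lambda>k. \<alpha> * basis_vec 2 k + 1 * basis_vec 3 k)"
  by (auto simp: vec8_eq_iff Bmult_coords basis_vec_def Bmult_ge_8)

lemma Bmult_odd_x4:
  "y \<in> V8_odd \<Longrightarrow> Bmult \<alpha> y (basis_vec 3) = (\<lambda>k. 1 * y k + (- \<alpha>) * Bmult \<alpha> y (basis_vec 2) k)"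
  by (drule V8_oddD) (auto simp: vec8_eq_iff Bmult_coords basis_vec_def Bmult_ge_8 algebra_simps)

definition proj12 :: "(nat \<Rightarrow> complex) \<Rightarrow> nat \<Rightarrow> complex" where
  "proj12 y = (\<lambda>k. if k = 4 \<or> k = 5 then y k else 0)"

lemma proj12_odd: "y \<in> V8_odd \<Longrightarrow> proj12 y \<in> V8_odd"
  by (auto simp: V8_odd_def proj12_def)

lemma proj12_idem: "proj12 (proj12 y) = proj12 y"
  by (auto simp: proj12_def)

text \<open>On the odd part, \<open>L(x\<^sub>4)\<close> and \<open>R(x\<^sub>3)\<close> are diagonal with entries \<open>2 \<mp> \<alpha>, \<plusminus>\<alpha>\<close>
  and \<open>1, -1, -1, 1\<close>, so this combination is twice the projection onto \<open>span(y\<^sub>1, y\<^sub>2)\<close>.\<close>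
lemma Bmult_x4_odd_plus_odd_x3:
  "y \<in> V8_odd \<Longrightarrow>
    (\<lambda>k. 1 * Bmult \<alpha> (basis_vec 3) y k + \<alpha> * Bmult \<alpha> y (basis_vec 2) k) = (\<lambda>k. 2 * proj12 y k)"
  by (drule V8_oddD) (auto simp: vec8_eq_iff Bmult_coords basis_vec_def Bmult_ge_8 algebra_simps proj12_def)

lemma Bmult_basis_products:
  "Bmult \<alpha> (basis_vec 3) (basis_vec 4) = (\<lambda>k. (2 - \<alpha>) * basis_vec 4 k)"
  "Bmult \<alpha> (basis_vec 3) (basis_vec 5) = (\<lambda>k. (2 + \<alpha>) * basis_vec 5 k)"
  "Bmult \<alpha> (basis_vec 3) (basis_vec 6) = (\<lambda>k. \<alpha> * basis_vec 6 k)"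
  "Bmult \<alpha> (basis_vec 3) (basis_vec 7) = (\<lambda>k. (- \<alpha>) * basis_vec 7 k)"
  "Bmult \<alpha> (basis_vec 4) (basis_vec 2) = (\<lambda>k. 1 * basis_vec 4 k)"
  "Bmult \<alpha> (basis_vec 5) (basis_vec 2) = (\<lambda>k. (- 1) * basis_vec 5 k)"
  "Bmult \<alpha> (basis_vec 6) (basis_vec 2) = (\<lambda>k. (- 1) * basis_vec 6 k)"
  "Bmult \<alpha> (basis_vec 7) (basis_vec 2) = (\<lambda>k. 1 * basis_vec 7 k)"
  "Bmult \<alpha> (basis_vec 5) (basis_vec 6) = (\<lambda>k. (- \<alpha> / 2) * basis_vec 0 k)"
  "Bmult \<alpha> (basis_vec 6) (basis_vec 5) = (\<lambda>k. (1 + \<alpha> / 2) * basis_vec 0 k)"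
  "Bmult \<alpha> (basis_vec 4) (basis_vec 7) = (\<lambda>k. (\<alpha> * (1 + \<alpha>) / 4) * basis_vec 1 k)"
  by (auto simp: vec8_eq_iff Bmult_coords basis_vec_def Bmult_ge_8)

locale B2_iso =
  fixes f :: "(nat \<Rightarrow> complex) \<Rightarrow> nat \<Rightarrow> complex" and a1 a2 :: complex
  assumes bij: "bij_betw f V8 V8"
    and additive: "\<forall>u\<in>V8. \<forall>v\<in>V8. f (\<lambda>k. u k + v k) = (\<lambda>k. f u k + f v k)"
    and homogeneous: "\<forall>c. \<forall>u\<in>V8. f (\<lambda>k. c * u k) = (\<lambda>k. c * f u k)"
    and even_image: "f ` V8_even \<subseteq> V8_even"
    and odd_image: "f ` V8_odd \<subseteq> V8_odd"
    and multiplicative: "\<forall>u\<in>V8. \<forall>v\<in>V8. f (Bmult a1 u v) = Bmult a2 (f u) (f v)"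
begin

lemma f_Bmult: "u \<in> V8 \<Longrightarrow> v \<in> V8 \<Longrightarrow> f (Bmult a1 u v) = Bmult a2 (f u) (f v)"
  using multiplicative by blast

lemma f_scale: "u \<in> V8 \<Longrightarrow> f (\<lambda>k. c * u k) = (\<lambda>k. c * f u k)"
  using homogeneous by blast

lemma f_lincomb:
  assumes "u \<in> V8" "v \<in> V8"
  shows "f (\<lambda>k. a * u k + b * v k) = (\<lambda>k. a * f u k + b * f v k)"
proof -
  have "(\<lambda>k. a * u k) \<in> V8" "(\<lambda>k. b * v k) \<in> V8"
    using assms by (auto simp: V8_def)
  then have "f (\<lambda>k. a * u k + b * v k) = (\<lambda>k. f (\<lambda>k. a * u k) k + f (\<lambda>k. b * v k) k)"
    using additive by auto
  also have "\<dots> = (\<lambda>k. a * f u k + b * f v k)"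
    using assms f_scale by auto
  finally show ?thesis .
qed

lemma f_zero: "f (\<lambda>k. 0) = (\<lambda>k. 0)"
  using f_scale[of "\<lambda>k. 0" 0] by (simp add: V8_def)

lemma f_eq_zero_imp:
  assumes "u \<in> V8" "f u = (\<lambda>k. 0)"
  shows "u = (\<lambda>k. 0)"
proof -
  have "(\<lambda>k. 0::complex) \<in> V8"
    by (simp add: V8_def)
  moreover have "inj_on f V8"
    using bij by (simp add: bij_betw_def)
  ultimately show ?thesis
    using assms f_zero by (metis inj_onD)
qed

lemma f_even: "u \<in> V8_even \<Longrightarrow> f u \<in> V8_even"
  using even_image by auto

lemma f_odd: "u \<in> V8_odd \<Longrightarrow> f u \<in> V8_odd"
  using odd_image by auto

text \<open>The preimage of an odd vector is odd: its even component is mapped to an even vector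
  that must vanish, hence is zero by injectivity.\<close>
lemma odd_preimage:
  assumes w: "w \<in> V8_odd"
  obtains y where "y \<in> V8_odd" "f y = w"
proof -
  obtain y0 where y0: "y0 \<in> V8" "f y0 = w"
    using bij w V8_odd_subset by (metis bij_betw_def imageE subsetD)
  define ye where "ye = (\<lambda>k. if k < 4 then y0 k else 0)"
  define yo where "yo = (\<lambda>k. if k < 4 then 0 else y0 k)"
  have ye: "ye \<in> V8_even"
    by (simp add: ye_def V8_even_def)
  have yo: "yo \<in> V8_odd"
    using y0(1) by (auto simp: yo_def V8_odd_def V8_def)
  have split: "y0 = (\<lambda>k. 1 * ye k + 1 * yo k)"
    by (auto simp: ye_def yo_def)
  have w_split: "w = (\<lambda>k. f ye k + f yo k)"
    using y0 split f_lincomb[of ye yo 1 1] ye yo V8_even_subset V8_odd_subset by auto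
  have "f ye = (\<lambda>k. 0)"
  proof
    fix k
    show "f ye k = 0"
    proof (cases "k < 4")
      case True
      then have "w k = 0" "f yo k = 0"
        using w f_odd[OF yo] by (auto simp: V8_odd_def)
      then show ?thesis
        using w_split by (metis add_cancel_left_right)
    qed (use f_even[OF ye] in \<open>simp add: V8_even_def\<close>)
  qed
  then have "ye = (\<lambda>k. 0)"
    using f_eq_zero_imp ye V8_even_subset by blast
  then show thesis
    using that split yo y0 by simp
qed

abbreviation m :: "nat \<Rightarrow> nat \<Rightarrow> complex" where
  "m j \<equiv> f (basis_vec j)"

lemma m_even_coord: "j < 4 \<Longrightarrow> 4 \<le> k \<Longrightarrow> m j k = 0"
  using f_even[OF basis_vec_even, of j] by (simp add: V8_even_def)

lemma m_odd_coord: "4 \<le> j \<Longrightarrow> j < 8 \<Longrightarrow> k < 4 \<or> 8 \<le> k \<Longrightarrow> m j k = 0"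
  using f_odd[OF basis_vec_odd, of j] by (auto simp: V8_odd_def)

lemma m_even_coords:
  "m 0 4 = 0" "m 0 5 = 0" "m 0 6 = 0" "m 0 7 = 0"
  "m 1 4 = 0" "m 1 5 = 0" "m 1 6 = 0" "m 1 7 = 0"
  "m 2 4 = 0" "m 2 5 = 0" "m 2 6 = 0" "m 2 7 = 0"
  "m 3 4 = 0" "m 3 5 = 0" "m 3 6 = 0" "m 3 7 = 0"
  by (auto intro: m_even_coord)

lemma m_odd_coords:
  "m 4 0 = 0" "m 4 1 = 0" "m 4 2 = 0" "m 4 3 = 0"
  "m 5 0 = 0" "m 5 1 = 0" "m 5 2 = 0" "m 5 3 = 0"
  "m 6 0 = 0" "m 6 1 = 0" "m 6 2 = 0" "m 6 3 = 0"
  "m 7 0 = 0" "m 7 1 = 0" "m 7 2 = 0" "m 7 3 = 0"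
  by (auto intro: m_odd_coord)

lemma m_basis_product:
  assumes "a < 8" "b < 8" "c < 8" "Bmult a1 (basis_vec a) (basis_vec b) = (\<lambda>k. s * basis_vec c k)"
  shows "(\<lambda>k. s * m c k) = Bmult a2 (m a) (m b)"
  using f_Bmult[of "basis_vec a" "basis_vec b"] f_scale[of "basis_vec c" s] assms
  by (simp add: basis_vec_in_V8)

text \<open>\<open>x\<^sub>1, x\<^sub>2, x\<^sub>3\<close> annihilate the odd part, while \<open>x\<^sub>4\<close> acts on \<open>y\<^sub>1\<close> and \<open>y\<^sub>2\<close> by
  \<open>2 - \<alpha>\<close> and \<open>2 + \<alpha>\<close>; so their images have no \<open>x\<^sub>4\<close>-component.\<close>
lemma m_coord_3: assumes "a < 3" shows "m a 3 = 0"
proof -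
  have a: "basis_vec a \<in> V8"
    using assms by (simp add: basis_vec_in_V8)
  have "Bmult a2 (m a) w = (\<lambda>k. 0)" if "w \<in> V8_odd" for w
  proof -
    obtain y where y: "y \<in> V8_odd" "f y = w"
      using odd_preimage[OF \<open>w \<in> V8_odd\<close>] .
    then have "Bmult a2 (m a) w = f (Bmult a1 (basis_vec a) y)"
      using f_Bmult[OF a] V8_odd_subset by auto
    then show ?thesis
      using Bmult_annihilates_odd[OF assms y(1)] f_zero by simp
  qed
  then have "Bmult a2 (m a) (basis_vec 4) 4 = 0" "Bmult a2 (m a) (basis_vec 5) 5 = 0"
    by (simp_all add: basis_vec_odd)
  then have "m a 3 * (2 - a2) = 0" "m a 3 * (2 + a2) = 0"
    using m_even_coord assms by (simp_all add: Bmult_4 Bmult_5 basis_vec_def)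
  then have "m a 3 * ((2 - a2) + (2 + a2)) = 0"
    by (simp only: distrib_left) simp
  then show ?thesis
    by simp
qed

lemma m3_coords:
  "m 3 0 = - a1 * m 2 0" "m 3 1 = - a1 * m 2 1"
  "m 3 3 = m 2 0 * m 2 1 + (m 2 2)\<^sup>2" "m 3 2 = a2 * m 3 3 - a1 * m 2 2"
proof -
  have x3: "basis_vec 2 \<in> V8" "basis_vec 3 \<in> V8"
    by (auto simp: basis_vec_in_V8)
  have sq: "(\<lambda>k. a1 * m 2 k + 1 * m 3 k) = Bmult a2 (m 2) (m 2)"
    using f_Bmult[OF x3(1) x3(1)] Bmult_x3_x3 f_lincomb[OF x3] by metis
  note coords = m_even_coords m_coord_3[of 2]
  from fun_cong[OF sq, of 0] coords show "m 3 0 = - a1 * m 2 0"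
    by (simp add: Bmult_coords algebra_simps eq_neg_iff_add_eq_0)
  from fun_cong[OF sq, of 1] coords show "m 3 1 = - a1 * m 2 1"
    by (simp add: Bmult_coords algebra_simps eq_neg_iff_add_eq_0)
  from fun_cong[OF sq, of 3] coords show m33: "m 3 3 = m 2 0 * m 2 1 + (m 2 2)\<^sup>2"
    by (simp add: Bmult_coords power2_eq_square field_simps)
  from fun_cong[OF sq, of 2] coords m33 show "m 3 2 = a2 * m 3 3 - a1 * m 2 2"
    by (simp add: Bmult_coords power2_eq_square field_simps)
qed

text \<open>Right multiplication by \<open>x\<^sub>4\<close> on the odd part is \<open>1 - \<alpha> R(x\<^sub>3)\<close>; evaluating its image at a
  preimage of \<open>y\<^sub>1\<close> in the \<open>y\<^sub>1\<close>-coordinate gives the normalisation.\<close>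
lemma m_3_3: "m 3 3 = 1"
proof -
  obtain y where y: "y \<in> V8_odd" "f y = basis_vec 4"
    using odd_preimage[OF basis_vec_odd[of 4]] by auto
  have V: "basis_vec 2 \<in> V8" "basis_vec 3 \<in> V8" "y \<in> V8" "Bmult a1 y (basis_vec 2) \<in> V8"
    using y V8_odd_subset by (auto simp: basis_vec_in_V8 Bmult_in_V8)
  have "Bmult a2 (basis_vec 4) (m 3) = f (Bmult a1 y (basis_vec 3))"
    using f_Bmult V y by metis
  also have "\<dots> = (\<lambda>k. 1 * basis_vec 4 k + (- a1) * Bmult a2 (basis_vec 4) (m 2) k)"
    using Bmult_odd_x4[OF y(1)] f_lincomb[OF V(3,4)] f_Bmult[OF V(3,1)] y(2) by metis
  finally have "m 3 2 + m 3 3 * (1 - a2) = 1 - a1 * (m 2 2 + m 2 3 * (1 - a2))"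
    by (drule_tac fun_cong[of _ _ 4]) (simp add: Bmult_4 basis_vec_def)
  then show ?thesis
    using m3_coords m_coord_3[of 2] by (simp add: algebra_simps)
qed

definition proj12_image :: "(nat \<Rightarrow> complex) \<Rightarrow> nat \<Rightarrow> complex" where
  "proj12_image w = (\<lambda>k. (Bmult a2 (m 3) w k + a1 * Bmult a2 w (m 2) k) / 2)"

lemma f_proj12:
  assumes y: "y \<in> V8_odd"
  shows "f (proj12 y) = proj12_image (f y)"
proof -
  have V: "basis_vec 2 \<in> V8" "basis_vec 3 \<in> V8" "y \<in> V8" "proj12 y \<in> V8"
    using y proj12_odd[OF y] V8_odd_subset by (auto simp: basis_vec_in_V8)
  have "(\<lambda>k. 2 * f (proj12 y) k) = f (\<lambda>k. 2 * proj12 y k)"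
    using f_scale[OF V(4)] by simp
  also have "\<dots> = (\<lambda>k. 1 * Bmult a2 (m 3) (f y) k + a1 * Bmult a2 (f y) (m 2) k)"
    using Bmult_x4_odd_plus_odd_x3[OF y, of a1, symmetric] f_lincomb[OF Bmult_in_V8 Bmult_in_V8]
      f_Bmult[OF V(2,3)] f_Bmult[OF V(3,1)] by metis
  finally show ?thesis
    unfolding proj12_image_def by (auto simp: fun_eq_iff field_simps)
qed

text \<open>\<open>proj12_image\<close> is \<open>f \<circ> proj12 \<circ> f\<inverse>\<close> on the odd part, hence idempotent there;
  evaluating this at \<open>y\<^sub>1\<close> and \<open>y\<^sub>2\<close> gives polynomial constraints on \<open>f(x\<^sub>3)\<close>.\<close>
lemma m2_constraints: "a1 * m 2 0 = 0" "a1 * m 2 1 = 0" "a1 * m 2 2 = a2"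
proof -
  obtain y4 where y4: "y4 \<in> V8_odd" "f y4 = basis_vec 4"
    using odd_preimage[OF basis_vec_odd[of 4]] by auto
  obtain y5 where y5: "y5 \<in> V8_odd" "f y5 = basis_vec 5"
    using odd_preimage[OF basis_vec_odd[of 5]] by auto
  note Z = m_3_3 m_coord_3[of 2] m_even_coords
  define z where "z = proj12 y4"
  have zo: "z \<in> V8_odd"
    using proj12_odd y4 z_def by simp
  have fz: "f z = proj12_image (basis_vec 4)"
    using f_proj12[OF y4(1)] y4(2) z_def by simp
  have fz_idem: "f z = proj12_image (f z)"
    using f_proj12[OF zo] proj12_idem z_def by simp
  have fz_even: "f z 3 = 0" "f z 2 = 0" "f z 1 = 0" "f z 0 = 0"
    using V8_oddD[OF f_odd[OF zo]] by auto
  have A1: "f z 4 = ((2 - a2) + a1 * m 2 2) / 2"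
    using fz Z by (simp add: proj12_image_def Bmult_coords basis_vec_def)
  have A2: "f z 5 = a1 * m 2 0 / 2"
    using fz Z by (simp add: proj12_image_def Bmult_coords basis_vec_def)
  have A3: "f z 4 = ((2 - a2) * f z 4 + a1 * (m 2 2 * f z 4 + m 2 1 * f z 5)) / 2"
    using fun_cong[OF fz_idem, of 4] Z fz_even by (simp add: proj12_image_def Bmult_coords algebra_simps)
  have A4: "f z 5 = ((2 + a2) * f z 5 + a1 * (m 2 0 * f z 4 - m 2 2 * f z 5)) / 2"
    using fun_cong[OF fz_idem, of 5] Z fz_even by (simp add: proj12_image_def Bmult_coords algebra_simps)
  define z' where "z' = proj12 y5"
  have zo': "z' \<in> V8_odd"
    using proj12_odd y5 z'_def by simp
  have fz': "f z' = proj12_image (basis_vec 5)"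
    using f_proj12[OF y5(1)] y5(2) z'_def by simp
  have fz'_idem: "f z' = proj12_image (f z')"
    using f_proj12[OF zo'] proj12_idem z'_def by simp
  have fz'_even: "f z' 3 = 0" "f z' 2 = 0" "f z' 1 = 0" "f z' 0 = 0"
    using V8_oddD[OF f_odd[OF zo']] by auto
  have B1: "f z' 4 = a1 * m 2 1 / 2"
    using fz' Z by (simp add: proj12_image_def Bmult_coords basis_vec_def)
  have B2: "f z' 5 = ((2 + a2) - a1 * m 2 2) / 2"
    using fz' Z by (simp add: proj12_image_def Bmult_coords basis_vec_def)
  have B3: "f z' 4 = ((2 - a2) * f z' 4 + a1 * (m 2 2 * f z' 4 + m 2 1 * f z' 5)) / 2"
    using fun_cong[OF fz'_idem, of 4] Z fz'_even by (simp add: proj12_image_def Bmult_coords algebra_simps)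
  have B4: "f z' 5 = ((2 + a2) * f z' 5 + a1 * (m 2 0 * f z' 4 - m 2 2 * f z' 5)) / 2"
    using fun_cong[OF fz'_idem, of 5] Z fz'_even by (simp add: proj12_image_def Bmult_coords algebra_simps)
  show C1: "a1 * m 2 0 = 0"
    using A1 A2 A4 by algebra
  show C2: "a1 * m 2 1 = 0"
    using B1 B2 B3 by algebra
  show "a1 * m 2 2 = a2"
    using A1 A2 A3 B1 B2 B4 C1 C2 by algebra
qed

lemma distinct_params_even_images:
  assumes "a1 \<noteq> a2"
  shows "a1 \<noteq> 0" "a2 = - a1"
    and "m 2 0 = 0" "m 2 1 = 0" "m 2 2 = -1" "m 2 3 = 0"
    and "m 3 0 = 0" "m 3 1 = 0" "m 3 2 = 0" "m 3 3 = 1"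
proof -
  show a1: "a1 \<noteq> 0"
    using m2_constraints(3) assms by auto
  show m20: "m 2 0 = 0" and m21: "m 2 1 = 0"
    using m2_constraints a1 by auto
  then have "(m 2 2)\<^sup>2 = 1"
    using m3_coords(3) m_3_3 by simp
  then have "m 2 2 = 1 \<or> m 2 2 = -1"
    by (simp add: power2_eq_1_iff)
  then show m22: "m 2 2 = -1"
    using m2_constraints(3) assms by auto
  then show a2: "a2 = - a1"
    using m2_constraints(3) by simp
  show "m 2 3 = 0"
    using m_coord_3 by simp
  show "m 3 0 = 0" "m 3 1 = 0" "m 3 2 = 0" "m 3 3 = 1"
    using m3_coords(1,2,4) m_3_3 m20 m21 m22 a2 by simp_all
qed

lemma m_odd_nonzero:
  assumes "4 \<le> j" "j < 8" "\<And>k. 4 \<le> k \<Longrightarrow> k < 8 \<Longrightarrow> k \<noteq> i \<Longrightarrow> m j k = 0"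
  shows "m j i \<noteq> 0"
proof
  assume mji: "m j i = 0"
  have "m j k = 0" for k
  proof (cases "4 \<le> k \<and> k < 8")
    case True
    then show ?thesis
      using assms(3) mji by (cases "k = i") auto
  qed (use m_odd_coord assms(1,2) in auto)
  then have "basis_vec j = (\<lambda>k. 0)"
    using f_eq_zero_imp[OF basis_vec_in_V8[OF assms(2)]] by (simp add: fun_eq_iff)
  then have "basis_vec j j = 0"
    by simp
  then show False
    by (simp add: basis_vec_def)
qed

lemma between_4_8_cases: "4 \<le> k \<Longrightarrow> k < (8::nat) \<Longrightarrow> k = 4 \<or> k = 5 \<or> k = 6 \<or> k = 7"
  by auto

text \<open>With \<open>f(x\<^sub>3) = -x\<^sub>3\<close> and \<open>f(x\<^sub>4) = x\<^sub>4\<close>, the eigenvalues of \<open>L(x\<^sub>4)\<close> and \<open>R(x\<^sub>3)\<close> on the odd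
  part force \<open>f\<close> to swap \<open>y\<^sub>1 \<leftrightarrow> y\<^sub>2\<close> and \<open>y\<^sub>3 \<leftrightarrow> y\<^sub>4\<close> up to nonzero scalars.\<close>
lemma distinct_params_odd_images:
  assumes "a1 \<noteq> a2"
  shows "m 4 4 = 0" "m 4 6 = 0" "m 4 7 = 0" "m 4 5 \<noteq> 0"
    and "m 5 5 = 0" "m 5 6 = 0" "m 5 7 = 0" "m 5 4 \<noteq> 0"
    and "m 6 4 = 0" "m 6 5 = 0" "m 6 6 = 0" "m 6 7 \<noteq> 0"
    and "m 7 4 = 0" "m 7 5 = 0" "m 7 7 = 0" "m 7 6 \<noteq> 0"
proof -
  note Z = distinct_params_even_images[OF assms] m_odd_coords
  have L4: "(\<lambda>k. (2 - a1) * m 4 k) = Bmult a2 (m 3) (m 4)"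
    and L5: "(\<lambda>k. (2 + a1) * m 5 k) = Bmult a2 (m 3) (m 5)"
    and L6: "(\<lambda>k. a1 * m 6 k) = Bmult a2 (m 3) (m 6)"
    and L7: "(\<lambda>k. (- a1) * m 7 k) = Bmult a2 (m 3) (m 7)"
    and R4: "(\<lambda>k. 1 * m 4 k) = Bmult a2 (m 4) (m 2)"
    and R5: "(\<lambda>k. (- 1) * m 5 k) = Bmult a2 (m 5) (m 2)"
    and R6: "(\<lambda>k. (- 1) * m 6 k) = Bmult a2 (m 6) (m 2)"
    and R7: "(\<lambda>k. 1 * m 7 k) = Bmult a2 (m 7) (m 2)"
    by (rule m_basis_product; simp add: Bmult_basis_products)+
  show z4: "m 4 4 = 0" "m 4 6 = 0" "m 4 7 = 0"
    using fun_cong[OF R4, of 4] fun_cong[OF L4, of 6] fun_cong[OF R4, of 7] Z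
    by (simp_all add: Bmult_coords algebra_simps)
  show z5: "m 5 5 = 0" "m 5 6 = 0" "m 5 7 = 0"
    using fun_cong[OF R5, of 5] fun_cong[OF R5, of 6] fun_cong[OF L5, of 7] Z
    by (simp_all add: Bmult_coords algebra_simps)
  show z6: "m 6 4 = 0" "m 6 5 = 0" "m 6 6 = 0"
    using fun_cong[OF L6, of 4] fun_cong[OF R6, of 5] fun_cong[OF R6, of 6] Z
    by (simp_all add: Bmult_coords algebra_simps)
  show z7: "m 7 4 = 0" "m 7 5 = 0" "m 7 7 = 0"
    using fun_cong[OF R7, of 4] fun_cong[OF L7, of 5] fun_cong[OF R7, of 7] Z
    by (simp_all add: Bmult_coords algebra_simps)
  show "m 4 5 \<noteq> 0" "m 5 4 \<noteq> 0" "m 6 7 \<noteq> 0" "m 7 6 \<noteq> 0"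
    by (intro m_odd_nonzero; use z4 z5 z6 z7 in \<open>auto dest!: between_4_8_cases\<close>)+
qed

text \<open>The products \<open>y\<^sub>2 y\<^sub>3\<close>, \<open>y\<^sub>3 y\<^sub>2\<close> lie on \<open>x\<^sub>1\<close> and \<open>y\<^sub>1 y\<^sub>4\<close> on \<open>x\<^sub>2\<close>, with
  coefficients that are not compatible with the swap unless \<open>\<alpha>\<^sub>1 = -1\<close>, and then not at all.\<close>
lemma params_eq: "a1 = a2"
proof (rule ccontr)
  assume ne: "a1 \<noteq> a2"
  note even = distinct_params_even_images[OF ne]
  note odd = distinct_params_odd_images[OF ne]
  note Z = even odd m_odd_coords m_even_coords
  have P1: "(\<lambda>k. (- a1 / 2) * m 0 k) = Bmult a2 (m 5) (m 6)"
    and P2: "(\<lambda>k. (1 + a1 / 2) * m 0 k) = Bmult a2 (m 6) (m 5)"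
    and P3: "(\<lambda>k. (a1 * (1 + a1) / 4) * m 1 k) = Bmult a2 (m 4) (m 7)"
    by (rule m_basis_product; simp add: Bmult_basis_products)+
  have Q1: "(- a1 / 2) * m 0 1 = m 5 4 * m 6 7 * (a2 * (1 + a2) / 4)"
    using fun_cong[OF P1, of 1] Z by (simp add: Bmult_coords)
  have Q2: "(1 + a1 / 2) * m 0 1 = m 5 4 * m 6 7 * (1 - a2 * (1 + a2) / 4)"
    using fun_cong[OF P2, of 1] Z by (simp add: Bmult_coords mult.commute)
  have Q3: "(a1 * (1 + a1) / 4) * m 1 0 = m 4 5 * m 7 6 * (- a2 / 2)"
    using fun_cong[OF P3, of 0] Z by (simp add: Bmult_coords)
  have "a1 * (m 5 4 * m 6 7 * (1 + a1)) = 0"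
    using Q1 Q2 even(2) by (simp add: field_simps) algebra
  then have a1: "a1 = -1"
    using even(1) odd by (simp add: add_eq_0_iff)
  have "m 4 5 * m 7 6 = 0"
    using Q3 even(2) a1 by simp
  then show False
    using odd by simp
qed

end

lemma B2_isomorphic_iff_B2_iso: "B2_isomorphic \<alpha>1 \<alpha>2 \<longleftrightarrow> (\<exists>f. B2_iso f \<alpha>1 \<alpha>2)"
  by (simp only: B2_isomorphic_def B2_iso_def conj_assoc)

theorem lemma3p5:
  fixes \<alpha>1 \<alpha>2 :: complex
  shows "B2_isomorphic \<alpha>1 \<alpha>2 \<longleftrightarrow> \<alpha>1 = \<alpha>2"
proof
  assume "B2_isomorphic \<alpha>1 \<alpha>2"
  then obtain f where "B2_iso f \<alpha>1 \<alpha>2"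
    using B2_isomorphic_iff_B2_iso by blast
  then show "\<alpha>1 = \<alpha>2"
    by (rule B2_iso.params_eq)
next
  assume "\<alpha>1 = \<alpha>2"
  then show "B2_isomorphic \<alpha>1 \<alpha>2"
    unfolding B2_isomorphic_def by (intro exI[of _ id]) (simp add: bij_betw_id)
qed

end
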